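(* Let $G$ be a connected weighted multigraph on the vertex set $V$, $|V|=n\ge2$, with positive edge weights. Then the long walk distance $d^{LW}$ on $V$ is graph-geodetic, i.e. for all $i,j,k\in V$, $d^{LW}(i,j)+d^{LW}(j,k)=d^{LW}(i,k)$ holds if and only if every path in $G$ connecting $i$ and $k$ contains $j$; and it is a squared Euclidean distance, i.e. there exist points $x_v\in\mathbb R^m$ ($v\in V$, some $m$) with $d^{LW}(i,j)=\|x_i-x_j\|_2^2$ for all $i,j\in V$.
   Context: Loops and multiple edges are allowed. The weighted adjacency matrix $A=(a_{ij})$ has $a_{ij}$ equal to the sum of weights of the edges joining $i$ and $j$; $\rho$ is its spectral radius. The long walk distance is $d^{LW}(i,j)=\lim_{\alpha\to\infty}\theta\bigl(\tfrac12(\ln r_{ii}+\ln r_{jj})-\ln r_{ij}\bigr)$, where $(r_{ij})=(I-tA)^{-1}$, $t=(\rho+\alpha^{-1})^{-1}$, $\theta=\ln(e+\alpha^{2/n})\frac{\alpha-1}{\ln\alpha}$. *)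

theory Defs
  imports "HOL-Analysis.Analysis"
begin

text \<open>A weighted multigraph on the vertex type 'n: a finite set E of edges, each edge e
  having a nonempty set ends e of at most two endpoints (one endpoint = loop), and a
  weight w e.\<close>

definition wmultigraph :: "'e set \<Rightarrow> ('e \<Rightarrow> 'n set) \<Rightarrow> ('e \<Rightarrow> real) \<Rightarrow> bool" where
  "wmultigraph E ends w \<longleftrightarrow> finite E \<and>
     (\<forall>e\<in>E. ends e \<noteq> {} \<and> finite (ends e) \<and> card (ends e) \<le> 2 \<and> w e > 0)"

definition wadj :: "'e set \<Rightarrow> ('e \<Rightarrow> 'n::finite set) \<Rightarrow> ('e \<Rightarrow> real) \<Rightarrow> real^'n^'n" where
  "wadj E ends w = (\<chi> i j. \<Sum>e\<in>{e\<in>E. ends e = {i, j}}. w e)"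

definition adjacent :: "'e set \<Rightarrow> ('e \<Rightarrow> 'n set) \<Rightarrow> 'n \<Rightarrow> 'n \<Rightarrow> bool" where
  "adjacent E ends u v \<longleftrightarrow> (\<exists>e\<in>E. ends e = {u, v})"

definition is_path :: "'e set \<Rightarrow> ('e \<Rightarrow> 'n set) \<Rightarrow> 'n list \<Rightarrow> 'n \<Rightarrow> 'n \<Rightarrow> bool" where
  "is_path E ends p i k \<longleftrightarrow> p \<noteq> [] \<and> hd p = i \<and> last p = k \<and> distinct p \<and>
     (\<forall>l. Suc l < length p \<longrightarrow> adjacent E ends (p ! l) (p ! Suc l))"

definition connected_graph :: "'e set \<Rightarrow> ('e \<Rightarrow> 'n set) \<Rightarrow> bool" where
  "connected_graph E ends \<longleftrightarrow> (\<forall>i k. \<exists>p. is_path E ends p i k)"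

definition spec_radius :: "real^'n::finite^'n \<Rightarrow> real" where
  "spec_radius A = Max {cmod z | z. det (mat z - (\<chi> i j. complex_of_real (A $ i $ j))) = 0}"

definition lw_t :: "real^'n::finite^'n \<Rightarrow> real \<Rightarrow> real" where
  "lw_t A \<alpha> = inverse (spec_radius A + inverse \<alpha>)"

definition lw_r :: "real^'n::finite^'n \<Rightarrow> real \<Rightarrow> real^'n^'n" where
  "lw_r A \<alpha> = matrix_inv (mat 1 - lw_t A \<alpha> *\<^sub>R A)"

definition lw_theta :: "nat \<Rightarrow> real \<Rightarrow> real" where
  "lw_theta n \<alpha> = ln (exp 1 + \<alpha> powr (2 / real n)) * (\<alpha> - 1) / ln \<alpha>"

definition lw_expr :: "real^'n::finite^'n \<Rightarrow> 'n \<Rightarrow> 'n \<Rightarrow> real \<Rightarrow> real" where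
  "lw_expr A i j \<alpha> = lw_theta CARD('n) \<alpha> *
     ((ln (lw_r A \<alpha> $ i $ i) + ln (lw_r A \<alpha> $ j $ j)) / 2 - ln (lw_r A \<alpha> $ i $ j))"

definition dLW :: "real^'n::finite^'n \<Rightarrow> 'n \<Rightarrow> 'n \<Rightarrow> real" where
  "dLW A i j = Lim at_top (lw_expr A i j)"

end

theory Submission
  imports Defs "HOL-Real_Asymp.Real_Asymp"
begin

text \<open>
  Let u be the positive unit Perron vector of the weighted adjacency matrix A and \<rho> = spec_radius A
  its eigenvalue. For \<epsilon> = 1/\<alpha> the resolvent is

    (I - A/(\<rho> + \<epsilon>))^-1 = (\<rho>/\<epsilon>) u u^T + (\<rho> + \<epsilon>) N_\<epsilon>^-1,   where N_\<epsilon> = (\<rho> + \<epsilon>) I - A + \<rho> u u^T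

  is positive definite uniformly in \<epsilon> \<ge> 0. Hence r_ij = \<rho> \<alpha> (u_i u_j + O(1/\<alpha>)); the factor \<rho> \<alpha>
  and the leading terms cancel in the logarithmic combination, and since \<theta>(\<alpha>) ~ 2 \<alpha> / n,

    d^LW(i,j) = (f_i - f_j)^T N_0^-1 (f_i - f_j) / n,   where f_v = e_v / u_v.

  This is a squared Euclidean distance because N_0^-1 is positive definite. Moreover
  d^LW(i,j) + d^LW(j,k) - d^LW(i,k) = 2 (\<phi>(j) - \<phi>(i)) / n, where \<phi> = N_0^-1 (f_j - f_k) / u is the
  potential of a unit flow from j to k. It is harmonic away from j and k, so by the maximum
  principle it attains its maximum \<phi>(j) exactly at the vertices that j separates from k.
\<close>

lemma is_path_propagate:
  assumes p: "is_path E ends p a b" and "P a"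
    and step: "\<And>x y. x \<in> set p \<Longrightarrow> y \<in> set p \<Longrightarrow> P x \<Longrightarrow> adjacent E ends x y \<Longrightarrow> P y"
  shows "P b"
proof -
  from p have ne: "p \<noteq> []" and "hd p = a" "last p = b"
    and adj: "\<And>l. Suc l < length p \<Longrightarrow> adjacent E ends (p ! l) (p ! Suc l)"
    unfolding is_path_def by auto
  have "P (p ! l)" if "l < length p" for l
    using that
  proof (induction l)
    case 0
    then show ?case using ne \<open>hd p = a\<close> \<open>P a\<close> by (simp add: hd_conv_nth)
  next
    case (Suc l)
    then show ?case using adj[of l] step[of "p ! l" "p ! Suc l"] by simp
  qed
  from this[of "length p - 1"] show ?thesis using ne \<open>last p = b\<close> by (simp add: last_conv_nth)
qed

lemma connected_graph_induct:
  assumes "connected_graph E ends" and "P a"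
    and "\<And>x y. P x \<Longrightarrow> adjacent E ends x y \<Longrightarrow> P y"
  shows "P b"
proof -
  obtain p where "is_path E ends p a b" using assms(1) unfolding connected_graph_def by blast
  then show ?thesis using is_path_propagate assms(2,3) by metis
qed

lemma is_path_singleton: "is_path E ends [k] k k"
  unfolding is_path_def by simp

lemma is_path_last_in_set: "is_path E ends p i k \<Longrightarrow> k \<in> set p"
  unfolding is_path_def by (metis last_in_set)

lemma is_path_drop:
  assumes p: "is_path E ends p a b" and l: "l < length p"
  shows "is_path E ends (drop l p) (p ! l) b"
  using assms unfolding is_path_def by (auto simp: hd_drop_conv_nth)

lemma is_path_Cons:
  assumes p: "is_path E ends p b c" and "a \<notin> set p" and "adjacent E ends a b"
  shows "is_path E ends (a # p) a c"
proof -
  have "adjacent E ends ((a # p) ! l) ((a # p) ! Suc l)" if "Suc l < length (a # p)" for l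
    using p that assms(3) unfolding is_path_def by (cases l) (auto simp: hd_conv_nth)
  then show ?thesis using assms unfolding is_path_def by simp
qed

definition separates :: "'e set \<Rightarrow> ('e \<Rightarrow> 'n set) \<Rightarrow> 'n \<Rightarrow> 'n \<Rightarrow> 'n \<Rightarrow> bool" where
  "separates E ends j a k \<longleftrightarrow> (\<forall>p. is_path E ends p a k \<longrightarrow> j \<in> set p)"

lemma separates_adjacent:
  assumes sep: "separates E ends j a k" and "a \<noteq> j" and adj: "adjacent E ends a b"
  shows "separates E ends j b k"
  unfolding separates_def
proof (intro allI impI)
  fix q assume q: "is_path E ends q b k"
  show "j \<in> set q"
  proof (cases "a \<in> set q")
    case True
    then obtain l where "l < length q" "q ! l = a" by (metis in_set_conv_nth)
    then have "is_path E ends (drop l q) a k" using is_path_drop[OF q] by metis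
    then have "j \<in> set (drop l q)" using sep unfolding separates_def by blast
    then show ?thesis by (meson in_set_dropD)
  next
    case False
    then have "j \<in> set (a # q)"
      using sep is_path_Cons[OF q False adj] unfolding separates_def by blast
    then show ?thesis using \<open>a \<noteq> j\<close> by simp
  qed
qed

lemma not_separates_from_self: "j \<noteq> k \<Longrightarrow> \<not> separates E ends j k k"
  using is_path_singleton unfolding separates_def by fastforce

section \<open>A discrete maximum principle\<close>

locale graph_potential =
  fixes E :: "'e set" and ends :: "'e \<Rightarrow> 'n::finite set"
    and W :: "'n \<Rightarrow> 'n \<Rightarrow> real" and \<phi> :: "'n \<Rightarrow> real" and j k :: 'n
  assumes connected: "connected_graph E ends"
    and W_nonneg: "0 \<le> W a b"
    and W_pos_iff: "0 < W a b \<longleftrightarrow> adjacent E ends a b"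
    and harmonic: "a \<noteq> j \<Longrightarrow> a \<noteq> k \<Longrightarrow> (\<Sum>b\<in>UNIV. W a b * (\<phi> a - \<phi> b)) = 0"
    and sink: "(\<Sum>b\<in>UNIV. W k b * (\<phi> k - \<phi> b)) < 0"
    and source_ne_sink: "j \<noteq> k"
begin

lemma neighbours_eq_at_max:
  assumes max: "\<forall>b. \<phi> b \<le> \<phi> a" and "a \<noteq> j"
  shows "a \<noteq> k" and "adjacent E ends a b \<Longrightarrow> \<phi> b = \<phi> a"
proof -
  have nonneg: "0 \<le> W a b * (\<phi> a - \<phi> b)" for b
    using W_nonneg max by simp
  then have "0 \<le> (\<Sum>b\<in>UNIV. W a b * (\<phi> a - \<phi> b))" by (simp add: sum_nonneg)
  then show "a \<noteq> k" using sink by force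
  then have "(\<Sum>b\<in>UNIV. W a b * (\<phi> a - \<phi> b)) = 0" using harmonic \<open>a \<noteq> j\<close> by blast
  then have "W a b * (\<phi> a - \<phi> b) = 0" using nonneg by (simp add: sum_nonneg_eq_0_iff)
  then show "adjacent E ends a b \<Longrightarrow> \<phi> b = \<phi> a" using W_pos_iff by force
qed

lemma neighbours_eq_at_local_min:
  assumes min: "\<forall>b. adjacent E ends a b \<longrightarrow> \<phi> a \<le> \<phi> b" and "a \<noteq> j" "a \<noteq> k"
    and adj: "adjacent E ends a b"
  shows "\<phi> b = \<phi> a"
proof -
  have nonneg: "0 \<le> W a b * (\<phi> b - \<phi> a)" for b
    using W_nonneg[of a b] W_pos_iff[of a b] min by (cases "0 < W a b") auto
  have "(\<Sum>b\<in>UNIV. W a b * (\<phi> b - \<phi> a)) = - (\<Sum>b\<in>UNIV. W a b * (\<phi> a - \<phi> b))"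
    by (simp add: sum_negf[symmetric] algebra_simps)
  also have "\<dots> = 0" using harmonic assms(2,3) by simp
  finally have "W a b * (\<phi> b - \<phi> a) = 0" using nonneg by (simp add: sum_nonneg_eq_0_iff)
  then show ?thesis using W_pos_iff adj by force
qed

lemma max_at_source: "\<phi> b \<le> \<phi> j"
proof (rule ccontr)
  assume "\<not> \<phi> b \<le> \<phi> j"
  have "Max (range \<phi>) \<in> range \<phi>" by (rule Max_in) simp_all
  then obtain a where "\<phi> a = Max (range \<phi>)" by (metis imageE)
  then have "\<forall>b. \<phi> b \<le> \<phi> a" by simp
  \<comment> \<open>Maximum points other than j pass the maximum on to their neighbours.\<close>
  then have "\<forall>b. \<phi> b \<le> \<phi> j"
  proof (rule connected_graph_induct[OF connected, where P = "\<lambda>x. \<forall>b. \<phi> b \<le> \<phi> x"])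
    fix x y assume x: "\<forall>b. \<phi> b \<le> \<phi> x" and "adjacent E ends x y"
    then have "x \<noteq> j" using \<open>\<not> \<phi> b \<le> \<phi> j\<close> by blast
    then show "\<forall>b. \<phi> b \<le> \<phi> y" using neighbours_eq_at_max(2)[OF x] x \<open>adjacent E ends x y\<close> by simp
  qed
  then show False using \<open>\<not> \<phi> b \<le> \<phi> j\<close> by blast
qed

lemma separates_if_eq_source:
  assumes "\<phi> i = \<phi> j"
  shows "separates E ends j i k"
  unfolding separates_def
proof (intro allI impI)
  fix p assume p: "is_path E ends p i k"
  show "j \<in> set p"
  proof (rule ccontr)
    assume "j \<notin> set p"
    have "\<phi> k = \<phi> j"
      using p assms
    proof (rule is_path_propagate)
      fix x y assume "x \<in> set p" "\<phi> x = \<phi> j" "adjacent E ends x y"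
      moreover have "x \<noteq> j" using \<open>x \<in> set p\<close> \<open>j \<notin> set p\<close> by blast
      ultimately show "\<phi> y = \<phi> j" using neighbours_eq_at_max(2) max_at_source by metis
    qed
    then show False using neighbours_eq_at_max(1) max_at_source source_ne_sink by metis
  qed
qed

lemma eq_source_if_separates:
  assumes sep: "separates E ends j i k"
  shows "\<phi> i = \<phi> j"
proof (cases "i = j")
  case False
  define R where "R = {a. a \<noteq> j \<and> separates E ends j a k}"
  have "i \<in> R" using False sep by (simp add: R_def)
  have "Min (\<phi> ` R) \<in> \<phi> ` R" using \<open>i \<in> R\<close> by (intro Min_in) auto
  then obtain a0 where "a0 \<in> R" "\<phi> a0 = Min (\<phi> ` R)" by (metis imageE)
  then have a0_min: "\<phi> a0 \<le> \<phi> b" if "b \<in> R" for b using that by simp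
  \<comment> \<open>On R the minimum value spreads to neighbours and, since R is closed under
    neighbours other than j, eventually reaches j.\<close>
  have spread: "\<phi> y = \<phi> a0 \<and> (y = j \<or> y \<in> R)"
    if "x \<in> R" "\<phi> x = \<phi> a0" "adjacent E ends x y" for x y
  proof -
    have x: "x \<noteq> j" "separates E ends j x k" using \<open>x \<in> R\<close> by (simp_all add: R_def)
    then have "x \<noteq> k" using not_separates_from_self source_ne_sink by metis
    have neighbour_in_R: "b = j \<or> b \<in> R" if "adjacent E ends x b" for b
      using separates_adjacent[OF x(2) x(1) that] by (auto simp: R_def)
    have "\<forall>b. adjacent E ends x b \<longrightarrow> \<phi> x \<le> \<phi> b"
      using neighbour_in_R max_at_source a0_min \<open>\<phi> x = \<phi> a0\<close> by metis
    then have "\<phi> y = \<phi> x" using neighbours_eq_at_local_min x(1) \<open>x \<noteq> k\<close> that(3) by blast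
    then show ?thesis using neighbour_in_R that by simp
  qed
  have "\<phi> j = \<phi> a0"
  proof (rule ccontr)
    assume "\<phi> j \<noteq> \<phi> a0"
    have "j \<in> R \<and> \<phi> j = \<phi> a0"
    proof (rule connected_graph_induct[OF connected, where P = "\<lambda>z. z \<in> R \<and> \<phi> z = \<phi> a0"])
      show "a0 \<in> R \<and> \<phi> a0 = \<phi> a0" using \<open>a0 \<in> R\<close> by simp
      show "y \<in> R \<and> \<phi> y = \<phi> a0" if "x \<in> R \<and> \<phi> x = \<phi> a0" "adjacent E ends x y" for x y
        using spread[of x y] that \<open>\<phi> j \<noteq> \<phi> a0\<close> by auto
    qed
    then show False using \<open>\<phi> j \<noteq> \<phi> a0\<close> by simp
  qed
  moreover have "\<phi> a0 \<le> \<phi> i" using a0_min \<open>i \<in> R\<close> .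
  ultimately show ?thesis using max_at_source[of i] by simp
qed simp

lemma eq_source_iff_separates: "\<phi> i = \<phi> j \<longleftrightarrow> separates E ends j i k"
  using separates_if_eq_source eq_source_if_separates by blast

end

lemma det_eq_0_iff_nontrivial_kernel:
  fixes M :: "'a::field^'n^'n"
  shows "det M = 0 \<longleftrightarrow> (\<exists>x. x \<noteq> 0 \<and> M *v x = 0)"
  by (metis invertible_det_nz invertible_left_inverse matrix_left_invertible_ker)

lemma mat_minus_mult_component:
  fixes M :: "'a::comm_ring_1^'n^'n"
  shows "((mat z - M) *v v) $ a = z * v $ a - (\<Sum>b\<in>UNIV. M $ a $ b * v $ b)"
proof -
  have "(\<Sum>b\<in>UNIV. (if a = b then z else 0) * v $ b) = z * v $ a"
    by (simp add: mult_delta_left)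
  then show ?thesis
    by (simp add: matrix_vector_mult_def mat_def left_diff_distrib sum_subtractf)
qed

lemma matrix_inv_mult_eqI:
  fixes M :: "'a::field^'n^'n"
  assumes "\<And>y. M *v g y = y"
  shows "matrix_inv M *v y = g y"
proof -
  have "surj ((*v) M)" using assms by (metis surjI)
  then obtain M' where "M ** M' = mat 1" using matrix_right_invertible_surjective by blast
  then have "invertible M" using invertible_right_inverse by blast
  then have "matrix_inv M ** M = mat 1"
    unfolding invertible_def matrix_inv_def by (rule someI2_ex) blast
  then show ?thesis using assms[of y] by (metis matrix_vector_mul_assoc matrix_vector_mul_lid)
qed

lemma sum_squares_reindex_nat:
  fixes X :: "'a \<Rightarrow> 'c::finite \<Rightarrow> real"
  shows "\<exists>(m::nat) (x :: 'a \<Rightarrow> nat \<Rightarrow> real). \<forall>i j.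
           (\<Sum>c\<in>UNIV. (X i c - X j c)\<^sup>2) = (\<Sum>l<m. (x i l - x j l)\<^sup>2)"
proof -
  obtain h :: "nat \<Rightarrow> 'c" where h: "bij_betw h {..<CARD('c)} UNIV"
    using ex_bij_betw_nat_finite[of "UNIV :: 'c set"] by (auto simp: lessThan_atLeast0)
  have reindex: "(\<Sum>c\<in>UNIV. (X i c - X j c)\<^sup>2) = (\<Sum>l<CARD('c). (X i (h l) - X j (h l))\<^sup>2)" for i j
    using sum.reindex_bij_betw[OF h, of "\<lambda>c. (X i c - X j c)\<^sup>2"] by simp
  show ?thesis
    by (rule exI[of _ "CARD('c)"], rule exI[of _ "\<lambda>i l. X i (h l)"]) (simp add: reindex)
qed

lemma tendsto_mult_ln_perturbation:
  fixes q :: "real \<Rightarrow> real"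
  assumes "0 < a" and q: "(q \<longlongrightarrow> q0) at_top"
  shows "((\<lambda>x. x * (ln (a + q x / x) - ln a)) \<longlongrightarrow> q0 / a) at_top"
proof -
  define y where "y x = q x * inverse x / a" for x
  have inverse_0: "((\<lambda>x::real. inverse x) \<longlongrightarrow> 0) at_top"
    by (rule tendsto_inverse_0_at_top[OF filterlim_ident])
  have "(y \<longlongrightarrow> q0 * 0 / a) at_top"
    unfolding y_def by (intro tendsto_intros q inverse_0) (use \<open>0 < a\<close> in simp)
  then have small: "\<forall>\<^sub>F x in at_top. \<bar>y x\<bar> < 1/2"
    using tendstoD[of y 0 at_top "1/2"] by (simp add: dist_real_def)
  \<comment> \<open>ln (1 + y) = y + O(y^2), and x y(x)^2 = O(1/x).\<close>
  define err where "err x = x * (ln (1 + y x) - y x)" for x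
  have "(err \<longlongrightarrow> 0) at_top"
  proof (rule Lim_null_comparison)
    show "\<forall>\<^sub>F x in at_top. norm (err x) \<le> 2 * (q x)\<^sup>2 / a\<^sup>2 * inverse x"
      using small eventually_gt_at_top[of "0::real"]
    proof eventually_elim
      case (elim x)
      have "\<bar>ln (1 + y x) - y x\<bar> \<le> 2 * (y x)\<^sup>2"
        by (rule abs_ln_one_plus_x_minus_x_bound) (use elim in simp)
      then have "x * \<bar>ln (1 + y x) - y x\<bar> \<le> x * (2 * (y x)\<^sup>2)"
        using elim by (simp add: mult_left_mono)
      also have "x * (2 * (y x)\<^sup>2) = 2 * (q x)\<^sup>2 / a\<^sup>2 * inverse x"
        using elim \<open>0 < a\<close> unfolding y_def by (simp add: field_simps power2_eq_square)
      finally show ?case using elim unfolding err_def by (simp add: abs_mult)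
    qed
    show "((\<lambda>x. 2 * (q x)\<^sup>2 / a\<^sup>2 * inverse x) \<longlongrightarrow> 0) at_top"
      using tendsto_mult[OF tendsto_const[of "2 * q0\<^sup>2 / a\<^sup>2"] inverse_0]
        tendsto_mult[OF tendsto_divide[OF tendsto_mult[OF tendsto_const[of 2] tendsto_power[OF q, of 2]]
          tendsto_const[of "a\<^sup>2"]] inverse_0] \<open>0 < a\<close>
      by simp
  qed
  then have "((\<lambda>x. q x / a + err x) \<longlongrightarrow> q0 / a + 0) at_top"
    by (intro tendsto_add tendsto_divide q tendsto_const) (use \<open>0 < a\<close> in simp)
  moreover have "\<forall>\<^sub>F x in at_top. q x / a + err x = x * (ln (a + q x / x) - ln a)"
    using small eventually_gt_at_top[of "0::real"]
  proof eventually_elim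
    case (elim x)
    have "a + q x / x = a * (1 + y x)" using elim \<open>0 < a\<close> unfolding y_def by (simp add: field_simps)
    moreover have "0 < 1 + y x" using elim by simp
    ultimately have "ln (a + q x / x) = ln a + ln (1 + y x)" using \<open>0 < a\<close> by (simp add: ln_mult)
    then show ?case using elim \<open>0 < a\<close> unfolding err_def y_def by (simp add: field_simps)
  qed
  ultimately show ?thesis using Lim_transform_eventually by fastforce
qed

lemma lw_theta_div_tendsto:
  assumes "0 < n"
  shows "((\<lambda>\<alpha>. lw_theta n \<alpha> / \<alpha>) \<longlongrightarrow> 2 / real n) at_top"
proof -
  have "0 < 2 / real n" using assms by simp
  then have "((\<lambda>\<alpha>::real. ln (exp 1 + \<alpha> powr (2 / real n)) / ln \<alpha> * ((\<alpha> - 1) / \<alpha>))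
      \<longlongrightarrow> 2 / real n) at_top"
    by real_asymp
  then show ?thesis unfolding lw_theta_def by (simp add: field_simps)
qed

locale real_symmetric_matrix =
  fixes A :: "real^'n::finite^'n"
  assumes symmetric: "A $ i $ j = A $ j $ i"
begin

lemma inner_mult_commute: "x \<bullet> (A *v y) = y \<bullet> (A *v x)"
proof -
  have "x \<bullet> (A *v y) = (\<Sum>i\<in>UNIV. \<Sum>j\<in>UNIV. x $ i * A $ i $ j * y $ j)"
    by (simp add: inner_vec_def matrix_vector_mult_def sum_distrib_left mult.assoc)
  also have "\<dots> = (\<Sum>j\<in>UNIV. \<Sum>i\<in>UNIV. y $ j * A $ j $ i * x $ i)"
    by (subst sum.swap) (intro sum.cong refl, simp add: symmetric[of j i for i j] mult_ac)
  also have "\<dots> = y \<bullet> (A *v x)"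
    by (simp add: inner_vec_def matrix_vector_mult_def sum_distrib_left mult.assoc)
  finally show ?thesis .
qed

lemma rayleigh_maximizer_exists:
  "\<exists>x. x \<bullet> x = 1 \<and> (\<forall>y. y \<bullet> (A *v y) \<le> (x \<bullet> (A *v x)) * (y \<bullet> y))"
proof -
  have "continuous_on (sphere 0 1) (\<lambda>x. x \<bullet> (A *v x))" by (intro continuous_intros)
  moreover have "sphere (0::real^'n) 1 \<noteq> {}" by simp
  ultimately obtain x :: "real^'n" where x: "x \<in> sphere 0 1"
    and max: "\<forall>y\<in>sphere 0 1. y \<bullet> (A *v y) \<le> x \<bullet> (A *v x)"
    using continuous_attains_sup[OF compact_sphere] by blast
  have "y \<bullet> (A *v y) \<le> (x \<bullet> (A *v x)) * (y \<bullet> y)" for y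
  proof (cases "y = 0")
    case False
    define c where "c = inverse (norm y)"
    have "c *\<^sub>R y \<in> sphere 0 1" using False by (simp add: c_def)
    then have "(c *\<^sub>R y) \<bullet> (A *v (c *\<^sub>R y)) \<le> x \<bullet> (A *v x)" using max by blast
    then have "c\<^sup>2 * (y \<bullet> (A *v y)) \<le> x \<bullet> (A *v x)"
      by (simp add: matrix_vector_mult_scaleR power2_eq_square mult.assoc)
    moreover have "c\<^sup>2 * (y \<bullet> y) = 1"
      using False by (simp add: c_def power2_norm_eq_inner[symmetric] field_simps)
    moreover have "c\<^sup>2 > 0" using False by (simp add: c_def)
    ultimately show ?thesis
      by (metis mult.left_commute mult.right_neutral mult_le_cancel_left_pos)
  qed simp
  moreover have "x \<bullet> x = 1" using x by (simp add: power2_norm_eq_inner[symmetric])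
  ultimately show ?thesis by blast
qed

lemma rayleigh_max_imp_eigenvector:
  assumes bound: "\<forall>y. y \<bullet> (A *v y) \<le> r * (y \<bullet> y)" and eq: "v \<bullet> (A *v v) = r * (v \<bullet> v)"
  shows "A *v v = r *\<^sub>R v"
proof -
  \<comment> \<open>With g = A v - r v, the quadratic t \<mapsto> w \<bullet> A w - r |w|^2 in w = v + t g is nonpositive
    and vanishes at t = 0, so its slope 2 |g|^2 there must vanish.\<close>
  define g where "g = A *v v - r *\<^sub>R v"
  define G where "G = g \<bullet> g"
  define c where "c = g \<bullet> (A *v g) - r * G"
  have quadratic: "2 * t * G + t\<^sup>2 * c \<le> 0" for t
  proof -
    have "(v + t *\<^sub>R g) \<bullet> (A *v (v + t *\<^sub>R g))
        = v \<bullet> (A *v v) + 2 * t * (g \<bullet> (A *v v)) + t\<^sup>2 * (g \<bullet> (A *v g))"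
      using inner_mult_commute[of v g]
      by (simp add: matrix_vector_right_distrib matrix_vector_mult_scaleR inner_add_left
          inner_add_right power2_eq_square algebra_simps)
    moreover have "(v + t *\<^sub>R g) \<bullet> (v + t *\<^sub>R g) = v \<bullet> v + 2 * t * (g \<bullet> v) + t\<^sup>2 * G"
      by (simp add: G_def inner_add_left inner_add_right power2_eq_square algebra_simps inner_commute)
    moreover have "g \<bullet> (A *v v) = G + r * (g \<bullet> v)"
      by (simp add: G_def g_def inner_diff_right)
    ultimately have "2 * t * G + t\<^sup>2 * c
        = (v + t *\<^sub>R g) \<bullet> (A *v (v + t *\<^sub>R g)) - r * ((v + t *\<^sub>R g) \<bullet> (v + t *\<^sub>R g))"
      using eq by (simp add: c_def algebra_simps power2_eq_square)
    then show ?thesis using bound by simp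
  qed
  have "G \<le> 0"
  proof (rule ccontr)
    assume "\<not> G \<le> 0"
    define t where "t = G / (\<bar>c\<bar> + 1)"
    have "t > 0" "t * \<bar>c\<bar> < G" using \<open>\<not> G \<le> 0\<close> by (auto simp: t_def field_simps)
    then have "t\<^sup>2 * \<bar>c\<bar> < t * G" by (simp add: power2_eq_square)
    moreover have "- (t\<^sup>2 * \<bar>c\<bar>) \<le> t\<^sup>2 * c"
      using mult_left_mono[of "- \<bar>c\<bar>" c "t\<^sup>2"] by simp
    moreover have "0 < t * G" using \<open>t > 0\<close> \<open>\<not> G \<le> 0\<close> by simp
    ultimately have "0 < 2 * t * G + t\<^sup>2 * c" by linarith
    then show False using quadratic[of t] by simp
  qed
  then have "g = 0" using inner_ge_zero[of g] by (simp add: G_def)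
  then show ?thesis by (simp add: g_def)
qed

lemma finite_eigenvalues: "finite {r. \<exists>x. x \<noteq> 0 \<and> A *v x = r *\<^sub>R x}"
proof -
  define R where "R = {r. \<exists>x. x \<noteq> 0 \<and> A *v x = r *\<^sub>R x}"
  define g where "g r = (SOME x. x \<noteq> 0 \<and> A *v x = r *\<^sub>R x)" for r
  have g: "g r \<noteq> 0" "A *v g r = r *\<^sub>R g r" if "r \<in> R" for r
    using someI_ex[of "\<lambda>x. x \<noteq> 0 \<and> A *v x = r *\<^sub>R x"] that by (auto simp: R_def g_def)
  have orth: "g r \<bullet> g s = 0" if "r \<in> R" "s \<in> R" "r \<noteq> s" for r s
  proof -
    have "r * (g s \<bullet> g r) = s * (g r \<bullet> g s)"
      using inner_mult_commute[of "g s" "g r"] g that by simp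
    then show ?thesis using that(3) by (simp add: inner_commute)
  qed
  have "inj_on g R"
    by (rule inj_onI) (metis g scaleR_cancel_right)
  moreover have "independent (g ` R)"
    by (rule pairwise_orthogonal_independent)
      (use orth g(1) in \<open>auto simp: pairwise_def orthogonal_def\<close>)
  then have "finite (g ` R)" using independent_bound by blast
  ultimately show ?thesis unfolding R_def[symmetric] by (metis finite_imageD)
qed

abbreviation complexified :: "complex^'n^'n" where
  "complexified \<equiv> \<chi> i j. complex_of_real (A $ i $ j)"

lemma complex_eigenvalue_real:
  assumes "v \<noteq> 0" and eigen: "\<And>a. (\<Sum>b\<in>UNIV. complex_of_real (A $ a $ b) * v $ b) = z * v $ a"
  shows "Im z = 0"
proof -
  \<comment> \<open>z |v|^2 = v* A v is self-conjugate because A is real symmetric.\<close>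
  define s where "s = (\<Sum>a\<in>UNIV. \<Sum>b\<in>UNIV. complex_of_real (A $ a $ b) * cnj (v $ a) * v $ b)"
  define N where "N = (\<Sum>a\<in>UNIV. (cmod (v $ a))\<^sup>2)"
  have "s = (\<Sum>a\<in>UNIV. cnj (v $ a) * (\<Sum>b\<in>UNIV. complex_of_real (A $ a $ b) * v $ b))"
    by (simp add: s_def sum_distrib_left mult_ac)
  also have "\<dots> = (\<Sum>a\<in>UNIV. z * (v $ a * cnj (v $ a)))"
    by (simp only: eigen) (simp add: mult_ac)
  also have "\<dots> = z * complex_of_real N"
    unfolding N_def by (simp only: complex_norm_square[symmetric] of_real_sum sum_distrib_left)
  finally have s_eq: "s = z * complex_of_real N" .
  have "cnj s = (\<Sum>a\<in>UNIV. \<Sum>b\<in>UNIV. complex_of_real (A $ a $ b) * v $ a * cnj (v $ b))"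
    by (simp add: s_def cnj_sum)
  also have "\<dots> = (\<Sum>b\<in>UNIV. \<Sum>a\<in>UNIV. complex_of_real (A $ a $ b) * v $ a * cnj (v $ b))"
    by (rule sum.swap)
  also have "\<dots> = s"
    unfolding s_def by (intro sum.cong refl) (simp add: symmetric[of b a for a b] mult_ac)
  finally have "cnj s = s" .
  moreover obtain a0 where "v $ a0 \<noteq> 0" using \<open>v \<noteq> 0\<close> by (metis vec_eq_iff zero_index)
  then have "N > 0" unfolding N_def by (intro sum_pos2[of _ a0]) auto
  ultimately have "cnj z = z" using s_eq by simp
  then show ?thesis by (simp add: complex_eq_iff)
qed

lemma char_root_imp_real_eigenvalue:
  assumes "det (mat z - complexified) = 0"
  obtains r x where "z = complex_of_real r" "x \<noteq> 0" "A *v x = r *\<^sub>R x"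
proof -
  obtain v where "v \<noteq> 0" and "(mat z - complexified) *v v = 0"
    using assms det_eq_0_iff_nontrivial_kernel by blast
  then have eigen: "(\<Sum>b\<in>UNIV. complex_of_real (A $ a $ b) * v $ b) = z * v $ a" for a
    using mat_minus_mult_component[of z complexified v a] by (simp add: vec_eq_iff)
  have "Im z = 0" using complex_eigenvalue_real[OF \<open>v \<noteq> 0\<close> eigen] .
  define x where "x = (\<chi> a. Re (v $ a))"
  define y where "y = (\<chi> a. Im (v $ a))"
  have "A *v x = Re z *\<^sub>R x" "A *v y = Re z *\<^sub>R y"
    using arg_cong[OF eigen, of Re] arg_cong[OF eigen, of Im] \<open>Im z = 0\<close>
    by (simp_all add: vec_eq_iff matrix_vector_mult_def x_def y_def Re_sum Im_sum)
  moreover have "x \<noteq> 0 \<or> y \<noteq> 0"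
    using \<open>v \<noteq> 0\<close> by (auto simp: x_def y_def vec_eq_iff complex_eq_iff)
  moreover have "z = complex_of_real (Re z)" using \<open>Im z = 0\<close> by (simp add: complex_eq_iff)
  ultimately show ?thesis using that by blast
qed

lemma eigenvalue_imp_char_root:
  assumes "x \<noteq> 0" "A *v x = r *\<^sub>R x"
  shows "det (mat (complex_of_real r) - complexified) = 0"
proof -
  define v where "v = (\<chi> a. complex_of_real (x $ a))"
  have "(\<Sum>b\<in>UNIV. A $ a $ b * x $ b) = r * x $ a" for a
    using arg_cong[OF assms(2), of "\<lambda>y. y $ a"] by (simp add: matrix_vector_mult_def)
  then have "(mat (complex_of_real r) - complexified) *v v = 0"
    by (simp add: vec_eq_iff mat_minus_mult_component v_def flip: of_real_mult of_real_sum)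
  moreover have "v \<noteq> 0" using assms(1) by (simp add: v_def vec_eq_iff)
  ultimately show ?thesis using det_eq_0_iff_nontrivial_kernel by blast
qed

lemma spec_radius_eq_Max_abs_eigenvalue:
  "spec_radius A = Max {\<bar>r\<bar> | r. \<exists>x. x \<noteq> 0 \<and> A *v x = r *\<^sub>R x}"
proof -
  have "{cmod z | z. det (mat z - complexified) = 0} = {\<bar>r\<bar> | r. \<exists>x. x \<noteq> 0 \<and> A *v x = r *\<^sub>R x}"
  proof (intro set_eqI iffI)
    fix c assume "c \<in> {cmod z | z. det (mat z - complexified) = 0}"
    then obtain z where "c = cmod z" and root: "det (mat z - complexified) = 0" by blast
    from root obtain r x where "z = complex_of_real r" "x \<noteq> 0" "A *v x = r *\<^sub>R x"
      by (rule char_root_imp_real_eigenvalue)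
    then show "c \<in> {\<bar>r\<bar> | r. \<exists>x. x \<noteq> 0 \<and> A *v x = r *\<^sub>R x}"
      using \<open>c = cmod z\<close> by auto
  next
    fix c assume "c \<in> {\<bar>r\<bar> | r. \<exists>x. x \<noteq> 0 \<and> A *v x = r *\<^sub>R x}"
    then obtain r x where "c = \<bar>r\<bar>" "x \<noteq> 0" "A *v x = r *\<^sub>R x" by blast
    then have "c = cmod (complex_of_real r) \<and> det (mat (complex_of_real r) - complexified) = 0"
      using eigenvalue_imp_char_root by simp
    then show "c \<in> {cmod z | z. det (mat z - complexified) = 0}" by blast
  qed
  then show ?thesis unfolding spec_radius_def by simp
qed

end

section \<open>The Perron vector of an irreducible nonnegative matrix\<close>

locale nonneg_irreducible_matrix = real_symmetric_matrix A for A :: "real^'n::finite^'n" +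
  assumes nonneg: "0 \<le> A $ i $ j"
    and irreducible: "(i, j) \<in> {(a, b). 0 < A $ a $ b}\<^sup>*"
    and nonzero: "A \<noteq> 0"
begin

lemma positive_entries_induct:
  assumes "P a" and "\<And>x y. P x \<Longrightarrow> 0 < A $ x $ y \<Longrightarrow> P y"
  shows "P b"
  using irreducible[of a b] assms by (induction rule: rtrancl_induct) auto

lemma nonneg_eigenvector_pos:
  assumes nonneg_v: "\<forall>b. 0 \<le> v $ b" and "v \<noteq> 0" and eigen: "A *v v = r *\<^sub>R v"
  shows "0 < v $ a"
proof (rule ccontr)
  assume "\<not> 0 < v $ a"
  then have "v $ a = 0" using nonneg_v[rule_format, of a] by linarith
  have "v $ b = 0" for b
    using \<open>v $ a = 0\<close>
  proof (rule positive_entries_induct)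
    fix x y assume "v $ x = 0" and "0 < A $ x $ y"
    have terms_nonneg: "0 \<le> A $ x $ b * v $ b" for b using nonneg nonneg_v by simp
    have "(\<Sum>b\<in>UNIV. A $ x $ b * v $ b) = 0"
      using arg_cong[OF eigen, of "\<lambda>w. w $ x"] \<open>v $ x = 0\<close> by (simp add: matrix_vector_mult_def)
    then have "A $ x $ y * v $ y = 0" using terms_nonneg by (simp add: sum_nonneg_eq_0_iff)
    then show "v $ y = 0" using \<open>0 < A $ x $ y\<close> by simp
  qed
  then show False using \<open>v \<noteq> 0\<close> by (simp add: vec_eq_iff)
qed

lemma perron_vector_exists:
  "\<exists>u \<rho>. (\<forall>a. 0 < u $ a) \<and> u \<bullet> u = 1 \<and> A *v u = \<rho> *\<^sub>R u \<and> (\<forall>x. x \<bullet> (A *v x) \<le> \<rho> * (x \<bullet> x))"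
proof -
  obtain x where "x \<bullet> x = 1" and max: "\<forall>y. y \<bullet> (A *v y) \<le> (x \<bullet> (A *v x)) * (y \<bullet> y)"
    using rayleigh_maximizer_exists by blast
  define \<rho> where "\<rho> = x \<bullet> (A *v x)"
  \<comment> \<open>Taking absolute values of the entries can only increase the Rayleigh quotient.\<close>
  define v where "v = (\<chi> i. \<bar>x $ i\<bar>)"
  have "v \<bullet> v = 1" using \<open>x \<bullet> x = 1\<close> by (simp add: v_def inner_vec_def abs_mult_self_eq)
  have "x $ i * A $ i $ j * x $ j \<le> v $ i * A $ i $ j * v $ j" for i j
  proof -
    have "x $ i * A $ i $ j * x $ j \<le> \<bar>x $ i * A $ i $ j * x $ j\<bar>" by (rule abs_ge_self)
    also have "\<dots> = v $ i * A $ i $ j * v $ j" by (simp add: v_def abs_mult nonneg)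
    finally show ?thesis .
  qed
  then have "\<rho> \<le> v \<bullet> (A *v v)"
    unfolding \<rho>_def inner_vec_def matrix_vector_mult_def
    by (simp add: sum_distrib_left mult.assoc sum_mono)
  moreover have "v \<bullet> (A *v v) \<le> \<rho>" using max \<open>v \<bullet> v = 1\<close> by (metis \<rho>_def mult.right_neutral)
  ultimately have "v \<bullet> (A *v v) = \<rho> * (v \<bullet> v)" using \<open>v \<bullet> v = 1\<close> by simp
  then have eigen: "A *v v = \<rho> *\<^sub>R v" using max rayleigh_max_imp_eigenvector by (simp add: \<rho>_def)
  have "v \<noteq> 0" using \<open>v \<bullet> v = 1\<close> by auto
  moreover have "\<forall>b. 0 \<le> v $ b" by (simp add: v_def)
  ultimately have "\<forall>a. 0 < v $ a" using nonneg_eigenvector_pos eigen by blast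
  then show ?thesis using \<open>v \<bullet> v = 1\<close> eigen max unfolding \<rho>_def by blast
qed

end

locale perron = nonneg_irreducible_matrix A for A :: "real^'n::finite^'n" +
  fixes u :: "real^'n" and \<rho> :: real
  assumes perron_pos: "0 < u $ a" and perron_unit: "u \<bullet> u = 1"
    and perron_eigen: "A *v u = \<rho> *\<^sub>R u" and rayleigh_le: "x \<bullet> (A *v x) \<le> \<rho> * (x \<bullet> x)"
begin

lemma perron_eigen_component: "(\<Sum>b\<in>UNIV. A $ a $ b * u $ b) = \<rho> * u $ a"
  using arg_cong[OF perron_eigen, of "\<lambda>w. w $ a"] by (simp add: matrix_vector_mult_def)

lemma rho_pos: "0 < \<rho>"
proof -
  obtain a b where "0 < A $ a $ b" using nonzero nonneg by (metis vec_eq_iff zero_index order.not_eq_order_implies_strict)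
  have terms_nonneg: "0 \<le> u $ i * A $ i $ j * u $ j" for i j
    using nonneg perron_pos by (simp add: less_imp_le)
  have "0 < u $ a * A $ a $ b * u $ b" using \<open>0 < A $ a $ b\<close> perron_pos by simp
  also have "\<dots> \<le> (\<Sum>i\<in>UNIV. \<Sum>j\<in>UNIV. u $ i * A $ i $ j * u $ j)"
    using terms_nonneg
    by (intro order_trans[OF member_le_sum[of b] member_le_sum[of a]]) (auto intro: sum_nonneg)
  also have "\<dots> = u \<bullet> (A *v u)"
    by (simp add: inner_vec_def matrix_vector_mult_def sum_distrib_left mult.assoc)
  also have "\<dots> = \<rho>" using perron_unit by (simp add: perron_eigen)
  finally show ?thesis .
qed

lemma abs_eigenvalue_le:
  assumes "x \<noteq> 0" and eigen: "A *v x = r *\<^sub>R x"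
  shows "\<bar>r\<bar> \<le> \<rho>"
proof -
  define c where "c = (\<chi> b. \<bar>x $ b\<bar>)"
  have "\<bar>r\<bar> * c $ a \<le> (A *v c) $ a" for a
  proof -
    have "\<bar>r\<bar> * c $ a = \<bar>\<Sum>b\<in>UNIV. A $ a $ b * x $ b\<bar>"
      using arg_cong[OF eigen, of "\<lambda>w. w $ a"] by (simp add: c_def matrix_vector_mult_def abs_mult)
    also have "\<dots> \<le> (A *v c) $ a"
      using sum_abs[of "\<lambda>b. A $ a $ b * x $ b" UNIV]
      by (simp add: c_def matrix_vector_mult_def abs_mult nonneg)
    finally show ?thesis .
  qed
  then have "u \<bullet> (\<bar>r\<bar> *\<^sub>R c) \<le> u \<bullet> (A *v c)"
    unfolding inner_vec_def using perron_pos by (intro sum_mono) (simp add: mult_left_mono less_imp_le)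
  also have "\<dots> = \<rho> * (u \<bullet> c)"
    using inner_mult_commute[of u c] by (simp add: perron_eigen inner_commute)
  finally have "\<bar>r\<bar> * (u \<bullet> c) \<le> \<rho> * (u \<bullet> c)" by simp
  moreover have "0 < u \<bullet> c"
  proof -
    obtain a where "x $ a \<noteq> 0" using \<open>x \<noteq> 0\<close> by (metis vec_eq_iff zero_index)
    then have "0 < u $ a * c $ a" using perron_pos by (simp add: c_def)
    also have "\<dots> \<le> u \<bullet> c"
      unfolding inner_vec_def inner_real_def using perron_pos
      by (intro member_le_sum) (simp_all add: c_def less_imp_le)
    finally show ?thesis .
  qed
  ultimately show ?thesis by simp
qed

lemma spec_radius_eq: "spec_radius A = \<rho>"
proof -
  have "{\<bar>r\<bar> | r. \<exists>x. x \<noteq> 0 \<and> A *v x = r *\<^sub>R x} = abs ` {r. \<exists>x. x \<noteq> 0 \<and> A *v x = r *\<^sub>R x}"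
    by blast
  then have "finite {\<bar>r\<bar> | r. \<exists>x. x \<noteq> 0 \<and> A *v x = r *\<^sub>R x}"
    using finite_eigenvalues by simp
  moreover have "u \<noteq> 0" by (metis perron_pos less_irrefl zero_index)
  then have "\<rho> = \<bar>\<rho>\<bar> \<and> (\<exists>x. x \<noteq> 0 \<and> A *v x = \<rho> *\<^sub>R x)"
    using perron_eigen rho_pos by auto
  then have "\<rho> \<in> {\<bar>r\<bar> | r. \<exists>x. x \<noteq> 0 \<and> A *v x = r *\<^sub>R x}" by blast
  ultimately show ?thesis
    unfolding spec_radius_eq_Max_abs_eigenvalue using abs_eigenvalue_le
    by (intro Max_eqI) auto
qed

section \<open>The resolvent\<close>

definition N :: "real \<Rightarrow> real^'n \<Rightarrow> real^'n" where
  "N e x = (\<rho> + e) *\<^sub>R x - A *v x + (\<rho> * (u \<bullet> x)) *\<^sub>R u"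

definition energy :: "real^'n \<Rightarrow> real" where
  "energy x = (\<Sum>a\<in>UNIV. \<Sum>b\<in>UNIV. A $ a $ b * u $ a * u $ b * (x $ a / u $ a - x $ b / u $ b)\<^sup>2)"

lemma energy_nonneg: "0 \<le> energy x"
  unfolding energy_def using nonneg perron_pos by (intro sum_nonneg) (simp add: less_imp_le)

lemma energy_eq: "energy x = 2 * (\<rho> * (x \<bullet> x) - x \<bullet> (A *v x))"
proof -
  have u_nz: "u $ a \<noteq> 0" for a using perron_pos[of a] by simp
  have expand: "A $ a $ b * u $ a * u $ b * (x $ a / u $ a - x $ b / u $ b)\<^sup>2
      = A $ a $ b * u $ b * (x $ a ^ 2 / u $ a) + A $ b $ a * u $ a * (x $ b ^ 2 / u $ b)
        - 2 * (x $ a * A $ a $ b * x $ b)" for a b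
    using u_nz[of a] u_nz[of b] symmetric[of a b] by (simp add: field_simps power2_eq_square)
  have diagonal: "(\<Sum>a\<in>UNIV. \<Sum>b\<in>UNIV. A $ a $ b * u $ b * (x $ a ^ 2 / u $ a)) = \<rho> * (x \<bullet> x)"
  proof -
    have "(\<Sum>b\<in>UNIV. A $ a $ b * u $ b * (x $ a ^ 2 / u $ a))
        = (\<Sum>b\<in>UNIV. A $ a $ b * u $ b) * (x $ a ^ 2 / u $ a)" for a
      by (rule sum_distrib_right[symmetric])
    also have "\<dots> a = \<rho> * (x $ a * x $ a)" for a
      using u_nz[of a] by (simp add: perron_eigen_component power2_eq_square)
    finally have "(\<Sum>b\<in>UNIV. A $ a $ b * u $ b * (x $ a ^ 2 / u $ a)) = \<rho> * (x $ a * x $ a)" for a .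
    then show ?thesis by (simp add: inner_vec_def sum_distrib_left)
  qed
  have "energy x = (\<Sum>a\<in>UNIV. \<Sum>b\<in>UNIV. A $ a $ b * u $ b * (x $ a ^ 2 / u $ a))
      + (\<Sum>a\<in>UNIV. \<Sum>b\<in>UNIV. A $ b $ a * u $ a * (x $ b ^ 2 / u $ b))
      - 2 * (\<Sum>a\<in>UNIV. \<Sum>b\<in>UNIV. x $ a * A $ a $ b * x $ b)"
    unfolding energy_def expand by (simp add: sum.distrib sum_subtractf sum_distrib_left)
  also have "(\<Sum>a\<in>UNIV. \<Sum>b\<in>UNIV. A $ b $ a * u $ a * (x $ b ^ 2 / u $ b))
      = (\<Sum>a\<in>UNIV. \<Sum>b\<in>UNIV. A $ a $ b * u $ b * (x $ a ^ 2 / u $ a))"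
    by (rule sum.swap)
  also have "(\<Sum>a\<in>UNIV. \<Sum>b\<in>UNIV. x $ a * A $ a $ b * x $ b) = x \<bullet> (A *v x)"
    by (simp add: inner_vec_def matrix_vector_mult_def sum_distrib_left mult.assoc)
  finally show ?thesis unfolding diagonal by simp
qed

lemma inner_N: "x \<bullet> N e x = energy x / 2 + e * (x \<bullet> x) + \<rho> * (u \<bullet> x)\<^sup>2"
proof -
  have "energy x / 2 = \<rho> * (x \<bullet> x) - x \<bullet> (A *v x)" by (simp add: energy_eq)
  then show ?thesis
    by (simp add: N_def inner_diff_right inner_add_right inner_commute[of x u]
        power2_eq_square algebra_simps)
qed

lemma energy_eq_0_imp_parallel:
  assumes "energy x = 0"
  shows "x = (x $ a / u $ a) *\<^sub>R u"
proof -
  define T where "T a b = A $ a $ b * u $ a * u $ b * (x $ a / u $ a - x $ b / u $ b)\<^sup>2" for a b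
  have T_nonneg: "0 \<le> T a b" for a b
    using nonneg perron_pos by (simp add: T_def less_imp_le)
  have "(\<Sum>a\<in>UNIV. \<Sum>b\<in>UNIV. T a b) = 0" using assms by (simp add: energy_def T_def)
  then have "(\<Sum>b\<in>UNIV. T a b) = 0" for a
    using T_nonneg by (subst (asm) sum_nonneg_eq_0_iff) (auto intro: sum_nonneg)
  then have T_0: "T a b = 0" for a b
    using T_nonneg by (subst (asm) sum_nonneg_eq_0_iff) auto
  have step: "x $ b / u $ b = x $ c / u $ c" if "0 < A $ b $ c" for b c
  proof -
    have "A $ b $ c * u $ b * u $ c \<noteq> 0" using that perron_pos[of b] perron_pos[of c] by simp
    then show ?thesis using T_0[of b c] by (simp add: T_def)
  qed
  define c where "c = x $ a / u $ a"
  have "x $ b / u $ b = c" for b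
  proof (rule positive_entries_induct[where P = "\<lambda>b. x $ b / u $ b = c"])
    fix y z assume "x $ y / u $ y = c" and "0 < A $ y $ z"
    then show "x $ z / u $ z = c" using step[of y z] by simp
  qed (simp add: c_def)
  then have "x $ b = c * u $ b" for b
    using perron_pos[of b] by (simp add: divide_eq_eq)
  then show ?thesis unfolding c_def[symmetric] by (simp add: vec_eq_iff)
qed

lemma inner_N_0_nonneg: "0 \<le> x \<bullet> N 0 x"
  unfolding inner_N using energy_nonneg[of x] rho_pos by simp

lemma inner_N_0_eq_0_imp: "x \<bullet> N 0 x = 0 \<Longrightarrow> x = 0"
proof -
  assume "x \<bullet> N 0 x = 0"
  then have sum_0: "energy x / 2 + \<rho> * (u \<bullet> x)\<^sup>2 = 0" by (simp add: inner_N)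
  have "0 \<le> \<rho> * (u \<bullet> x)\<^sup>2" using rho_pos by simp
  then have "energy x = 0" and "\<rho> * (u \<bullet> x)\<^sup>2 = 0" using sum_0 energy_nonneg[of x] by linarith+
  then have "energy x = 0" and "u \<bullet> x = 0" using rho_pos by simp_all
  obtain c where x: "x = c *\<^sub>R u" using energy_eq_0_imp_parallel \<open>energy x = 0\<close> by blast
  then have "c = 0" using \<open>u \<bullet> x = 0\<close> perron_unit by simp
  then show "x = 0" using x by simp
qed

lemma N_add: "N e (x + y) = N e x + N e y"
  unfolding N_def by (simp add: algebra_simps inner_add_right matrix_vector_right_distrib)

lemma N_scaleR: "N e (c *\<^sub>R x) = c *\<^sub>R N e x"
  unfolding N_def by (simp add: algebra_simps matrix_vector_mult_scaleR)

lemma linear_N: "linear (N e)"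
  by (rule linearI) (simp_all add: N_add N_scaleR)

lemma N_shift: "N e x = N 0 x + e *\<^sub>R x"
  unfolding N_def by (simp add: algebra_simps)

lemma inner_N_shift: "x \<bullet> N e x = x \<bullet> N 0 x + e * (x \<bullet> x)"
  by (subst N_shift) (simp add: inner_add_right)

lemma inner_N_commute: "x \<bullet> N e y = y \<bullet> N e x"
  by (simp add: N_def inner_diff_right inner_add_right inner_mult_commute[of x y]
      inner_commute[of x y] inner_commute[of x u] inner_commute[of y u])

lemma inner_perron_N: "u \<bullet> N e x = (\<rho> + e) * (u \<bullet> x)"
  by (simp add: N_def inner_diff_right inner_add_right inner_mult_commute[of u x] perron_eigen
      perron_unit inner_commute[of x u] algebra_simps)

lemma N_coercive: "\<exists>\<kappa>>0. \<forall>x. \<kappa> * (x \<bullet> x) \<le> x \<bullet> N 0 x"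
proof -
  have "continuous_on (sphere 0 1) (\<lambda>x. x \<bullet> N 0 x)" unfolding N_def by (intro continuous_intros)
  moreover have "sphere (0::real^'n) 1 \<noteq> {}" by simp
  ultimately obtain x0 :: "real^'n" where "x0 \<in> sphere 0 1"
    and min: "\<forall>y\<in>sphere 0 1. x0 \<bullet> N 0 x0 \<le> y \<bullet> N 0 y"
    using continuous_attains_inf[OF compact_sphere] by blast
  define \<kappa> where "\<kappa> = x0 \<bullet> N 0 x0"
  have "0 \<le> \<kappa>" unfolding \<kappa>_def by (rule inner_N_0_nonneg)
  moreover have "x0 \<noteq> 0" using \<open>x0 \<in> sphere 0 1\<close> by auto
  then have "\<kappa> \<noteq> 0" using inner_N_0_eq_0_imp unfolding \<kappa>_def by blast
  ultimately have "0 < \<kappa>" by simp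
  have "\<kappa> * (y \<bullet> y) \<le> y \<bullet> N 0 y" for y
  proof (cases "y = 0")
    case False
    define c where "c = inverse (norm y)"
    have "c *\<^sub>R y \<in> sphere 0 1" using False by (simp add: c_def)
    then have "\<kappa> \<le> (c *\<^sub>R y) \<bullet> N 0 (c *\<^sub>R y)" using min unfolding \<kappa>_def by blast
    also have "\<dots> = c\<^sup>2 * (y \<bullet> N 0 y)" by (simp add: N_scaleR power2_eq_square)
    finally have "\<kappa> \<le> c\<^sup>2 * (y \<bullet> N 0 y)" .
    then have "\<kappa> * (norm y)\<^sup>2 \<le> c\<^sup>2 * (y \<bullet> N 0 y) * (norm y)\<^sup>2"
      by (simp add: mult_right_mono)
    also have "\<dots> = y \<bullet> N 0 y" using False by (simp add: c_def field_simps)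
    finally show ?thesis by (simp add: power2_norm_eq_inner)
  qed (simp add: N_def)
  then show ?thesis using \<open>0 < \<kappa>\<close> by blast
qed

lemma inner_N_pos:
  assumes "0 \<le> e" and "x \<noteq> 0"
  shows "0 < x \<bullet> N e x"
proof -
  have "x \<bullet> N 0 x \<noteq> 0" using inner_N_0_eq_0_imp assms(2) by blast
  then have "0 < x \<bullet> N 0 x" using inner_N_0_nonneg[of x] by linarith
  moreover have "0 \<le> e * (x \<bullet> x)" using assms(1) by simp
  ultimately show ?thesis using inner_N_shift[of x e] by linarith
qed

lemma bij_N: assumes "0 \<le> e" shows "bij (N e)"
proof -
  have "inj (N e)"
  proof (rule injI)
    fix x y assume "N e x = N e y"
    then have "(x - y) \<bullet> N e (x - y) = 0"
      using N_add[of e "x - y" y] by simp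
    then show "x = y" using inner_N_pos[OF assms, of "x - y"] by (metis less_irrefl eq_iff_diff_eq_0)
  qed
  moreover have "surj (N e)"
    by (rule linear_injective_imp_surjective) (simp_all add: linear_N \<open>inj (N e)\<close>)
  ultimately show ?thesis by (simp add: bij_def)
qed

definition Ninv :: "real \<Rightarrow> real^'n \<Rightarrow> real^'n" where
  "Ninv e = inv (N e)"

lemma N_Ninv: "0 \<le> e \<Longrightarrow> N e (Ninv e y) = y"
  unfolding Ninv_def using bij_N by (simp add: bij_is_surj surj_f_inv_f)

lemma Ninv_eqI: "0 \<le> e \<Longrightarrow> N e x = y \<Longrightarrow> Ninv e y = x"
  unfolding Ninv_def using bij_N by (metis bij_is_inj inv_f_f)

lemma Ninv_diff: "0 \<le> e \<Longrightarrow> Ninv e (x - y) = Ninv e x - Ninv e y"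
  using N_add[of e "Ninv e x - Ninv e y" "Ninv e y"] by (intro Ninv_eqI) (simp_all add: N_Ninv eq_diff_eq)

lemma inner_Ninv_commute: "0 \<le> e \<Longrightarrow> x \<bullet> Ninv e y = y \<bullet> Ninv e x"
  using inner_N_commute[of "Ninv e x" e "Ninv e y"] by (simp add: N_Ninv inner_commute)

lemma inner_perron_Ninv: "0 \<le> e \<Longrightarrow> (\<rho> + e) * (u \<bullet> Ninv e y) = u \<bullet> y"
  using inner_perron_N[of e "Ninv e y"] by (simp add: N_Ninv)

lemma Ninv_tendsto: "((\<lambda>\<alpha>. Ninv (inverse \<alpha>) y) \<longlongrightarrow> Ninv 0 y) at_top"
proof -
  obtain \<kappa> where "0 < \<kappa>" and coercive: "\<And>x. \<kappa> * (x \<bullet> x) \<le> x \<bullet> N 0 x"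
    using N_coercive by blast
  define s where "s = Ninv 0 y"
  have bound: "norm (Ninv e y - s) \<le> inverse \<kappa> * norm s * e" if "0 \<le> e" for e
  proof -
    define d where "d = Ninv e y - s"
    have "N e d = - (e *\<^sub>R s)"
      using N_add[of e d s] N_shift[of e s] N_Ninv[OF that, of y] N_Ninv[of 0 y]
      by (simp add: d_def s_def eq_neg_iff_add_eq_0)
    have "\<kappa> * (d \<bullet> d) \<le> d \<bullet> N 0 d" by (rule coercive)
    also have "\<dots> \<le> d \<bullet> N e d" using that inner_N_shift[of d e] by simp
    also have "\<dots> = e * ((- d) \<bullet> s)" using \<open>N e d = - (e *\<^sub>R s)\<close> by simp
    also have "\<dots> \<le> e * (norm d * norm s)"
      using mult_left_mono[OF norm_cauchy_schwarz[of "- d" s] that] by simp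
    finally have "\<kappa> * norm d * norm d \<le> e * norm s * norm d"
      by (simp add: power2_norm_eq_inner[symmetric] power2_eq_square mult_ac)
    then have "\<kappa> * norm d \<le> e * norm s"
      by (cases "d = 0") (simp_all add: \<open>0 \<le> e\<close>)
    then show ?thesis using \<open>0 < \<kappa>\<close> by (simp add: d_def field_simps)
  qed
  have "((\<lambda>\<alpha>. inverse \<kappa> * norm s * inverse \<alpha>) \<longlongrightarrow> inverse \<kappa> * norm s * 0) at_top"
    by (intro tendsto_mult tendsto_const tendsto_inverse_0_at_top filterlim_ident)
  moreover have "\<forall>\<^sub>F \<alpha> in at_top. norm (Ninv (inverse \<alpha>) y - s) \<le> inverse \<kappa> * norm s * inverse \<alpha>"
    using eventually_ge_at_top[of "0::real"] by eventually_elim (simp add: bound)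
  ultimately have "((\<lambda>\<alpha>. Ninv (inverse \<alpha>) y - s) \<longlongrightarrow> 0) at_top"
    using Lim_null_comparison by force
  then show ?thesis unfolding s_def by (simp add: LIM_zero_iff)
qed

lemma resolvent_right_inverse:
  assumes "0 < e"
  shows "(mat 1 - inverse (\<rho> + e) *\<^sub>R A) *v ((\<rho> / e * (u \<bullet> z)) *\<^sub>R u + (\<rho> + e) *\<^sub>R Ninv e z) = z"
proof -
  define t where "t = inverse (\<rho> + e)"
  define M where "M = mat 1 - t *\<^sub>R A"
  have tp: "t * (\<rho> + e) = 1" using assms rho_pos by (simp add: t_def)
  \<comment> \<open>Since t (\<rho> + e) = 1, the matrix M = I - t A agrees with t N_e up to a multiple of u.\<close>
  have M_N: "M *v v = t *\<^sub>R (N e v - (\<rho> * (u \<bullet> v)) *\<^sub>R u)" for v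
  proof -
    have "t *\<^sub>R ((\<rho> + e) *\<^sub>R v) = v" by (simp add: tp)
    then show ?thesis
      by (simp add: M_def N_def matrix_vector_mult_diff_rdistrib scaleR_matrix_vector_assoc[symmetric]
          scaleR_diff_right scaleR_add_right)
  qed
  have Nu: "N e u = (\<rho> + e) *\<^sub>R u"
    by (simp add: N_def perron_eigen perron_unit scaleR_add_left)
  have um: "u \<bullet> Ninv e z = t * (u \<bullet> z)"
    using inner_perron_Ninv[of e z] assms tp by (metis less_imp_le mult.assoc mult.commute mult_1)
  have "M *v ((\<rho> / e * (u \<bullet> z)) *\<^sub>R u + (\<rho> + e) *\<^sub>R Ninv e z)
      = (\<rho> / e * (u \<bullet> z) * (t * e)) *\<^sub>R u + (t * (\<rho> + e)) *\<^sub>R (z - (\<rho> * (u \<bullet> Ninv e z)) *\<^sub>R u)"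
    using assms
    by (simp add: matrix_vector_right_distrib matrix_vector_mult_scaleR M_N Nu N_Ninv
        perron_unit scaleR_diff_right algebra_simps)
  also have "\<dots> = z"
    using assms by (simp add: tp um mult.commute mult.left_commute)
  finally show ?thesis unfolding M_def t_def .
qed

lemma resolvent_mult:
  assumes "0 < \<alpha>"
  shows "lw_r A \<alpha> *v y = (\<rho> * \<alpha> * (u \<bullet> y)) *\<^sub>R u + (\<rho> + inverse \<alpha>) *\<^sub>R Ninv (inverse \<alpha>) y"
proof -
  have "lw_r A \<alpha> = matrix_inv (mat 1 - inverse (\<rho> + inverse \<alpha>) *\<^sub>R A)"
    by (simp add: lw_r_def lw_t_def spec_radius_eq)
  then show ?thesis
    using matrix_inv_mult_eqI[OF resolvent_right_inverse[of "inverse \<alpha>"]] assms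
    by (simp add: divide_inverse)
qed

section \<open>The limit of the long walk distance\<close>

lemma Ninv_scaleR: "0 \<le> e \<Longrightarrow> Ninv e (c *\<^sub>R x) = c *\<^sub>R Ninv e x"
  by (intro Ninv_eqI) (simp_all add: N_scaleR N_Ninv)

definition scaled_axis :: "'n \<Rightarrow> real^'n" where
  "scaled_axis v = axis v (inverse (u $ v))"

definition green :: "'n \<Rightarrow> 'n \<Rightarrow> real" where
  "green i j = scaled_axis i \<bullet> Ninv 0 (scaled_axis j)"

definition D :: "'n \<Rightarrow> 'n \<Rightarrow> real" where
  "D i j = (scaled_axis i - scaled_axis j) \<bullet> Ninv 0 (scaled_axis i - scaled_axis j)"

lemma green_commute: "green i j = green j i"
  unfolding green_def by (rule inner_Ninv_commute) simp

lemma D_eq_green: "D i j = green i i + green j j - 2 * green i j"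
  using green_commute[of i j]
  by (simp add: D_def green_def Ninv_diff inner_diff_left inner_diff_right)

definition remainder :: "'n \<Rightarrow> 'n \<Rightarrow> real \<Rightarrow> real" where
  "remainder i j \<alpha> = (\<rho> + inverse \<alpha>) / \<rho> * Ninv (inverse \<alpha>) (axis j 1) $ i"

lemma resolvent_entry:
  assumes "0 < \<alpha>"
  shows "lw_r A \<alpha> $ i $ j = \<rho> * \<alpha> * (u $ i * u $ j + remainder i j \<alpha> / \<alpha>)"
proof -
  have "(\<rho> * \<alpha>) * (remainder i j \<alpha> / \<alpha>) = (\<rho> + inverse \<alpha>) * Ninv (inverse \<alpha>) (axis j 1) $ i"
    using rho_pos assms by (simp add: remainder_def)
  then show ?thesis
    using arg_cong[OF resolvent_mult[OF assms, of "axis j 1"], of "\<lambda>v. v $ i"]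
    by (simp add: matrix_vector_mult_basis column_def inner_axis distrib_left)
qed

lemma remainder_tendsto: "(remainder i j \<longlongrightarrow> green i j * (u $ i * u $ j)) at_top"
proof -
  have "(remainder i j \<longlongrightarrow> (\<rho> + 0) / \<rho> * Ninv 0 (axis j 1) $ i) at_top"
    unfolding remainder_def
    by (intro tendsto_intros Ninv_tendsto tendsto_inverse_0_at_top filterlim_ident)
      (use rho_pos in auto)
  moreover have "green i j * (u $ i * u $ j) = Ninv 0 (axis j 1) $ i"
  proof -
    have "scaled_axis j = inverse (u $ j) *\<^sub>R axis j 1" by (simp add: scaled_axis_def vec_eq_iff axis_def)
    then show ?thesis
      using perron_pos[of i] perron_pos[of j]
      by (simp add: green_def Ninv_scaleR scaled_axis_def inner_axis' field_simps)
  qed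
  ultimately show ?thesis using rho_pos by simp
qed

lemma eventually_remainder_pos: "\<forall>\<^sub>F \<alpha> in at_top. 0 < u $ i * u $ j + remainder i j \<alpha> / \<alpha>"
proof -
  have "((\<lambda>\<alpha>. u $ i * u $ j + remainder i j \<alpha> * inverse \<alpha>)
      \<longlongrightarrow> u $ i * u $ j + green i j * (u $ i * u $ j) * 0) at_top"
    by (intro tendsto_intros remainder_tendsto tendsto_inverse_0_at_top filterlim_ident)
  then show ?thesis
    using perron_pos[of i] perron_pos[of j] by (simp add: divide_inverse order_tendstoD(1))
qed

definition log_gap :: "'n \<Rightarrow> 'n \<Rightarrow> real \<Rightarrow> real" where
  "log_gap i j \<alpha> = \<alpha> * (ln (u $ i * u $ j + remainder i j \<alpha> / \<alpha>) - ln (u $ i * u $ j))"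

lemma log_gap_tendsto: "(log_gap i j \<longlongrightarrow> green i j) at_top"
proof -
  have "0 < u $ i * u $ j" using perron_pos[of i] perron_pos[of j] by simp
  from tendsto_mult_ln_perturbation[OF this remainder_tendsto[of i j]] show ?thesis
    using perron_pos[of i] perron_pos[of j] unfolding log_gap_def by simp
qed

text \<open>The common factor \<rho> \<alpha> of the resolvent entries cancels from the logarithmic combination,
  and so do the leading terms because ln (u_i u_i) + ln (u_j u_j) = 2 ln (u_i u_j).\<close>

lemma eventually_lw_expr_eq:
  "\<forall>\<^sub>F \<alpha> in at_top. lw_expr A i j \<alpha>
     = lw_theta CARD('n) \<alpha> / \<alpha> * ((log_gap i i \<alpha> + log_gap j j \<alpha>) / 2 - log_gap i j \<alpha>)"
  using eventually_gt_at_top[of "0::real"]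
    eventually_remainder_pos[of i i] eventually_remainder_pos[of j j] eventually_remainder_pos[of i j]
proof eventually_elim
  case (elim \<alpha>)
  define P where "P x y = u $ x * u $ y + remainder x y \<alpha> / \<alpha>" for x y
  have "0 < \<rho> * \<alpha>" using rho_pos \<open>0 < \<alpha>\<close> by simp
  have ln_entry: "ln (lw_r A \<alpha> $ x $ y) = ln (\<rho> * \<alpha>) + ln (P x y)"
    if "0 < u $ x * u $ y + remainder x y \<alpha> / \<alpha>" for x y
    unfolding resolvent_entry[OF \<open>0 < \<alpha>\<close>] P_def using \<open>0 < \<rho> * \<alpha>\<close> that by (rule ln_mult_pos)
  have cancel: "(k + a + (k + b)) / 2 - (k + c) = (a + b) / 2 - c" for k a b c :: real
    by (simp add: field_simps)
  have "lw_expr A i j \<alpha> = lw_theta CARD('n) \<alpha> * ((ln (P i i) + ln (P j j)) / 2 - ln (P i j))"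
    unfolding lw_expr_def ln_entry[OF elim(2)] ln_entry[OF elim(3)] ln_entry[OF elim(4)] cancel ..
  moreover have "(ln (u $ i * u $ i) + ln (u $ j * u $ j)) / 2 = ln (u $ i * u $ j)"
    using perron_pos[of i] perron_pos[of j] by (simp add: ln_mult)
  moreover have "(\<alpha> * (a - a0) + \<alpha> * (b - b0)) / 2 - \<alpha> * (c - c0) = \<alpha> * ((a + b) / 2 - c)"
    if "(a0 + b0) / 2 = c0" for a b c a0 b0 c0 :: real
    by (simp add: that[symmetric] field_simps)
  ultimately show ?case using \<open>0 < \<alpha>\<close> by (simp add: log_gap_def P_def)
qed

lemma lw_expr_tendsto: "(lw_expr A i j \<longlongrightarrow> D i j / real CARD('n)) at_top"
proof -
  have "((\<lambda>\<alpha>. lw_theta CARD('n) \<alpha> / \<alpha> * ((log_gap i i \<alpha> + log_gap j j \<alpha>) / 2 - log_gap i j \<alpha>))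
      \<longlongrightarrow> 2 / real CARD('n) * ((green i i + green j j) / 2 - green i j)) at_top"
    by (intro tendsto_intros lw_theta_div_tendsto log_gap_tendsto) simp_all
  moreover have "2 / real CARD('n) * ((green i i + green j j) / 2 - green i j) = D i j / real CARD('n)"
    by (simp add: D_eq_green field_simps)
  ultimately show ?thesis by (simp add: tendsto_cong[OF eventually_lw_expr_eq])
qed

lemma dLW_eq_D: "dLW A i j = D i j / real CARD('n)"
  unfolding dLW_def by (rule tendsto_Lim[OF trivial_limit_at_top_linorder lw_expr_tendsto])

section \<open>Euclidean representation and cut points\<close>

lemma D_eq_inner_N:
  "D i j = (Ninv 0 (scaled_axis i) - Ninv 0 (scaled_axis j))
     \<bullet> N 0 (Ninv 0 (scaled_axis i) - Ninv 0 (scaled_axis j))"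
  by (simp add: D_def Ninv_diff[symmetric] N_Ninv inner_commute)

lemma D_self [simp]: "D i i = 0"
  by (simp add: D_def Ninv_diff)

definition coord :: "('n \<times> 'n) option \<Rightarrow> real^'n \<Rightarrow> real" where
  "coord c x = (case c of
      None \<Rightarrow> sqrt \<rho> * (u \<bullet> x)
    | Some (a, b) \<Rightarrow> sqrt (A $ a $ b * u $ a * u $ b / 2) * (x $ a / u $ a - x $ b / u $ b))"

lemma coord_diff: "coord c (x - y) = coord c x - coord c y"
  by (cases c) (auto simp: coord_def inner_diff_right diff_divide_distrib algebra_simps)

lemma inner_N_0_sum_squares: "x \<bullet> N 0 x = (\<Sum>c\<in>UNIV. (coord c x)\<^sup>2)"
proof -
  have weight_nonneg: "0 \<le> A $ a $ b * u $ a * u $ b / 2" for a b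
    using nonneg perron_pos by (simp add: less_imp_le)
  have "(\<Sum>c\<in>UNIV. (coord c x)\<^sup>2)
      = (coord None x)\<^sup>2 + (\<Sum>a\<in>UNIV. \<Sum>b\<in>UNIV. (coord (Some (a, b)) x)\<^sup>2)"
    by (simp add: UNIV_option_conv sum.reindex sum.cartesian_product flip: UNIV_Times_UNIV)
  also have "\<dots> = \<rho> * (u \<bullet> x)\<^sup>2 + energy x / 2"
    using rho_pos weight_nonneg
    by (simp add: coord_def power_mult_distrib energy_def sum_divide_distrib)
  finally show ?thesis by (simp add: inner_N)
qed

lemma D_sum_squares:
  "D i j = (\<Sum>c\<in>UNIV. (coord c (Ninv 0 (scaled_axis i)) - coord c (Ninv 0 (scaled_axis j)))\<^sup>2)"
  by (simp add: D_eq_inner_N inner_N_0_sum_squares coord_diff)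

lemma dLW_sum_squares:
  "\<exists>X :: 'n \<Rightarrow> ('n \<times> 'n) option \<Rightarrow> real. \<forall>i j. dLW A i j = (\<Sum>c\<in>UNIV. (X i c - X j c)\<^sup>2)"
proof -
  define X where "X v c = coord c (Ninv 0 (scaled_axis v)) / sqrt (real CARD('n))" for v c
  have "dLW A i j = (\<Sum>c\<in>UNIV. (X i c - X j c)\<^sup>2)" for i j
    by (simp add: dLW_eq_D D_sum_squares X_def diff_divide_distrib[symmetric] power_divide
        sum_divide_distrib)
  then show ?thesis by blast
qed

definition potential :: "'n \<Rightarrow> 'n \<Rightarrow> 'n \<Rightarrow> real" where
  "potential j k a = Ninv 0 (scaled_axis j - scaled_axis k) $ a / u $ a"

lemma D_decompose: "D i k = D i j + D j k + 2 * (potential j k i - potential j k j)"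
proof -
  define y where "y = scaled_axis j - scaled_axis k"
  have "scaled_axis i - scaled_axis k = (scaled_axis i - scaled_axis j) + y" by (simp add: y_def)
  then have "D i k = D i j + D j k + 2 * ((scaled_axis i - scaled_axis j) \<bullet> Ninv 0 y)"
    using inner_Ninv_commute[of 0 y "scaled_axis i - scaled_axis j"]
    by (simp add: D_def y_def Ninv_diff inner_diff_left inner_diff_right inner_add_left inner_add_right)
  also have "(scaled_axis i - scaled_axis j) \<bullet> Ninv 0 y = potential j k i - potential j k j"
    by (simp add: scaled_axis_def potential_def y_def inner_diff_left inner_axis' field_simps)
  finally show ?thesis .
qed

lemma potential_flux:
  "(\<Sum>b\<in>UNIV. A $ a $ b * u $ b * (potential j k a - potential j k b)) = (scaled_axis j - scaled_axis k) $ a"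
proof -
  define y where "y = scaled_axis j - scaled_axis k"
  define z where "z = Ninv 0 y"
  have "u \<bullet> y = 0"
    using perron_pos[of j] perron_pos[of k] by (simp add: y_def scaled_axis_def inner_diff_right inner_axis)
  then have "u \<bullet> z = 0" using inner_perron_Ninv[of 0 y] rho_pos by (simp add: z_def)
  then have "\<rho> *\<^sub>R z - A *v z = y" using N_Ninv[of 0 y] by (simp add: z_def N_def)
  then have zy: "\<rho> * z $ a - (A *v z) $ a = y $ a"
    using arg_cong[of _ _ "\<lambda>v. v $ a"] by fastforce
  have u_potential: "u $ b * potential j k b = z $ b" for b
    using perron_pos[of b] by (simp add: potential_def z_def y_def)
  have "(\<Sum>b\<in>UNIV. A $ a $ b * u $ b * (potential j k a - potential j k b))
      = (\<Sum>b\<in>UNIV. A $ a $ b * u $ b) * potential j k a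
        - (\<Sum>b\<in>UNIV. A $ a $ b * (u $ b * potential j k b))"
    by (simp add: right_diff_distrib sum_subtractf sum_distrib_right mult.assoc)
  also have "\<dots> = \<rho> * z $ a - (A *v z) $ a"
    using u_potential[of a]
    by (simp add: perron_eigen_component u_potential matrix_vector_mult_def mult.assoc)
  finally show ?thesis using zy by (simp add: y_def)
qed

lemma graph_potential_potential:
  assumes "connected_graph E ends" and adjacent_iff: "\<And>a b. 0 < A $ a $ b \<longleftrightarrow> adjacent E ends a b"
    and "j \<noteq> k"
  shows "graph_potential E ends (\<lambda>a b. A $ a $ b * u $ b) (potential j k) j k"
proof
  show "a \<noteq> j \<Longrightarrow> a \<noteq> k \<Longrightarrow> (\<Sum>b\<in>UNIV. A $ a $ b * u $ b * (potential j k a - potential j k b)) = 0"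
    for a by (simp add: potential_flux scaled_axis_def axis_def)
  show "(\<Sum>b\<in>UNIV. A $ k $ b * u $ b * (potential j k k - potential j k b)) < 0"
    using \<open>j \<noteq> k\<close> perron_pos[of k] by (simp add: potential_flux scaled_axis_def axis_def)
  show "0 < A $ a $ b * u $ b \<longleftrightarrow> adjacent E ends a b" for a b
    using perron_pos[of b] adjacent_iff[of a b] by (auto simp: zero_less_mult_iff)
qed (use assms nonneg perron_pos in \<open>simp_all add: less_imp_le\<close>)

lemma D_geodetic:
  assumes "connected_graph E ends" and "\<And>a b. 0 < A $ a $ b \<longleftrightarrow> adjacent E ends a b"
  shows "D i j + D j k = D i k \<longleftrightarrow> separates E ends j i k"
proof (cases "j = k")
  case True
  then show ?thesis using is_path_last_in_set by (auto simp: separates_def)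
next
  case False
  then have "potential j k i = potential j k j \<longleftrightarrow> separates E ends j i k"
    using graph_potential.eq_source_iff_separates[OF graph_potential_potential[OF assms]] by blast
  then show ?thesis using D_decompose[of i k j] by auto
qed

lemma dLW_geodetic:
  assumes "connected_graph E ends" and "\<And>a b. 0 < A $ a $ b \<longleftrightarrow> adjacent E ends a b"
  shows "dLW A i j + dLW A j k = dLW A i k \<longleftrightarrow> separates E ends j i k"
  using D_geodetic[OF assms] by (simp add: dLW_eq_D add_divide_distrib[symmetric])

end

lemma wadj_symmetric: "wadj E ends w $ i $ j = wadj E ends w $ j $ i"
proof -
  have "{i, j} = {j, i}" by blast
  then show ?thesis by (simp add: wadj_def)
qed

lemma wadj_nonneg: "wmultigraph E ends w \<Longrightarrow> 0 \<le> wadj E ends w $ i $ j"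
  unfolding wmultigraph_def wadj_def vec_lambda_beta by (intro sum_nonneg) (simp add: less_imp_le)

lemma wadj_pos_iff_adjacent:
  assumes "wmultigraph E ends w"
  shows "0 < wadj E ends w $ i $ j \<longleftrightarrow> adjacent E ends i j"
proof
  assume "0 < wadj E ends w $ i $ j"
  moreover have "wadj E ends w $ i $ j = 0" if "{e \<in> E. ends e = {i, j}} = {}"
    unfolding wadj_def vec_lambda_beta that by simp
  ultimately have "{e \<in> E. ends e = {i, j}} \<noteq> {}" by auto
  then show "adjacent E ends i j" unfolding adjacent_def by blast
next
  assume "adjacent E ends i j"
  then have "{e \<in> E. ends e = {i, j}} \<noteq> {}" unfolding adjacent_def by blast
  then show "0 < wadj E ends w $ i $ j"
    using assms unfolding wmultigraph_def wadj_def vec_lambda_beta by (intro sum_pos) auto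
qed

lemma nonneg_irreducible_matrix_wadj:
  fixes ends :: "'e \<Rightarrow> 'n::finite set"
  assumes wmg: "wmultigraph E ends w" and conn: "connected_graph E ends" and "2 \<le> CARD('n)"
  shows "nonneg_irreducible_matrix (wadj E ends w)"
proof unfold_locales
  let ?R = "{(a, b). 0 < wadj E ends w $ a $ b}"
  show "wadj E ends w $ i $ j = wadj E ends w $ j $ i" for i j by (rule wadj_symmetric)
  show "0 \<le> wadj E ends w $ i $ j" for i j using wmg by (rule wadj_nonneg)
  show irreducible: "(i, j) \<in> ?R\<^sup>*" for i j
    using conn rtrancl_refl
    by (rule connected_graph_induct) (auto simp: wadj_pos_iff_adjacent[OF wmg] intro: rtrancl_into_rtrancl)
  obtain a b :: 'n where "a \<noteq> b"
    using \<open>2 \<le> CARD('n)\<close> card_le_Suc0_iff_eq[of "UNIV :: 'n set"] by auto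
  with irreducible[of a b] obtain c where "(a, c) \<in> ?R"
    by (auto elim: converse_rtranclE)
  then show "wadj E ends w \<noteq> 0" by auto
qed

theorem corollary10:
  fixes E :: "'e set" and ends :: "'e \<Rightarrow> 'n::finite set" and w :: "'e \<Rightarrow> real"
  assumes "wmultigraph E ends w"
    and "connected_graph E ends"
    and "CARD('n) \<ge> 2"
  shows "(\<forall>i j. (lw_expr (wadj E ends w) i j \<longlongrightarrow> dLW (wadj E ends w) i j) at_top)
    \<and> (\<forall>i j k. dLW (wadj E ends w) i j + dLW (wadj E ends w) j k = dLW (wadj E ends w) i k
               \<longleftrightarrow> (\<forall>p. is_path E ends p i k \<longrightarrow> j \<in> set p))
    \<and> (\<exists>(m::nat) (x :: 'n \<Rightarrow> nat \<Rightarrow> real). \<forall>i j.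
          dLW (wadj E ends w) i j = (\<Sum>l<m. (x i l - x j l)\<^sup>2))"
proof -
  let ?A = "wadj E ends w"
  have wadj_matrix: "nonneg_irreducible_matrix ?A"
    using assms by (rule nonneg_irreducible_matrix_wadj)
  obtain u \<rho> where perron_vector: "\<forall>a. 0 < u $ a" "u \<bullet> u = 1" "?A *v u = \<rho> *\<^sub>R u"
    "\<forall>x. x \<bullet> (?A *v x) \<le> \<rho> * (x \<bullet> x)"
    using nonneg_irreducible_matrix.perron_vector_exists[OF wadj_matrix] by blast
  have perron_wadj: "perron ?A u \<rho>"
    by (intro perron.intro[OF wadj_matrix] perron_axioms.intro) (use perron_vector in simp_all)
  have "(lw_expr ?A i j \<longlongrightarrow> dLW ?A i j) at_top" for i j
    using perron.lw_expr_tendsto[OF perron_wadj] perron.dLW_eq_D[OF perron_wadj] by simp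
  moreover have "dLW ?A i j + dLW ?A j k = dLW ?A i k \<longleftrightarrow> (\<forall>p. is_path E ends p i k \<longrightarrow> j \<in> set p)"
    for i j k
    using perron.dLW_geodetic[OF perron_wadj assms(2)] wadj_pos_iff_adjacent[OF assms(1)]
    unfolding separates_def by blast
  moreover have "\<exists>m (x :: 'n \<Rightarrow> nat \<Rightarrow> real). \<forall>i j. dLW ?A i j = (\<Sum>l<m. (x i l - x j l)\<^sup>2)"
  proof -
    obtain X :: "'n \<Rightarrow> ('n \<times> 'n) option \<Rightarrow> real"
      where X: "\<And>i j. dLW ?A i j = (\<Sum>c\<in>UNIV. (X i c - X j c)\<^sup>2)"
      using perron.dLW_sum_squares[OF perron_wadj] by blast
    then show ?thesis using sum_squares_reindex_nat[of X] by simp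
  qed
  ultimately show ?thesis by blast
qed

end
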